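(* Let $(A,B)$ be a finite-dimensional odd-symmetric associative superalgebra over an algebraically closed field $\mathbb{K}$ of characteristic zero which is $B$-irreducible and non-simple, and such that $A_{\bar 0}$ is a semi-simple associative algebra. Then $A$ is isomorphic to the semi-direct product $S\oplus P(S^* )$ of a simple associative algebra $S$ by $P(S^* )$ by means of $(L^*,R^* )$.
   Context: A superalgebra is $\mathbb{Z}_2$-graded, $A=A_{\bar 0}\oplus A_{\bar 1}$, $A_\alpha A_\beta\subseteq A_{\alpha+\beta}$. An odd-symmetric structure on $A$ is a bilinear form $B$ with $B(A_{\bar 0},A_{\bar 0})=B(A_{\bar 1},A_{\bar 1})=0$ which is supersymmetric ($B(x,y)=(-1)^{|x||y|}B(y,x)$), associative ($B(xy,z)=B(x,yz)$) and non-degenerate. $(A,B)$ is $B$-irreducible if its only graded two-sided ideals $I$ with $B|_{I\times I}$ non-degenerate are $\{0\}$ and $A$. A superalgebra is simple if its product is non-zero and it has no graded two-sided ideals other than $\{0\}$ and itself. Semi-direct product: for an associative algebra $S$ (viewed as purely even), let $P(S^* )$ be the $\mathbb{Z}_2$-graded space with zero even part and odd part $S^*$. On $S\oplus P(S^* )$ define $(x+f)\star(y+h)=xy+L^*(x)(h)+R^*(y)(f)$ for $x,y\in S$, $f,h\in S^*$, where $L^*(x)(h)=h\circ R_x$ and $R^*(y)(f)=f\circ L_y$ ($L_x,R_x$ the left and right multiplications by $x$ in $S$), together with the odd form $B(f,x)=B(x,f)=f(x)$, $B(S,S)=0=B(S^*,S^* )$; this is an odd-symmetric associative superalgebra. 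*)

theory Defs
  imports Main "HOL-Computational_Algebra.Polynomial"
begin

definition alg_closed :: "'k::field itself \<Rightarrow> bool" where
  "alg_closed _ \<longleftrightarrow> (\<forall>p :: 'k poly. degree p \<noteq> 0 \<longrightarrow> (\<exists>x. poly p x = 0))"

definition fin_dim_vs :: "('k::field \<Rightarrow> 'v::ab_group_add \<Rightarrow> 'v) \<Rightarrow> bool" where
  "fin_dim_vs scale \<longleftrightarrow> vector_space scale \<and>
     (\<exists>F. finite F \<and> module.span scale F = UNIV)"

definition bilinear_on ::
  "('k::field \<Rightarrow> 'v::ab_group_add \<Rightarrow> 'v) \<Rightarrow> 'v set \<Rightarrow> ('v \<Rightarrow> 'v \<Rightarrow> 'v) \<Rightarrow> bool" where
  "bilinear_on scale S m \<longleftrightarrow>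
     (\<forall>x\<in>S. \<forall>y\<in>S. \<forall>z\<in>S. m (x + y) z = m x z + m y z \<and> m z (x + y) = m z x + m z y) \<and>
     (\<forall>c. \<forall>x\<in>S. \<forall>y\<in>S. m (scale c x) y = scale c (m x y) \<and> m x (scale c y) = scale c (m x y))"

definition assoc_superalgebra ::
  "('k::field \<Rightarrow> 'v::ab_group_add \<Rightarrow> 'v) \<Rightarrow> ('v \<Rightarrow> 'v \<Rightarrow> 'v) \<Rightarrow> 'v set \<Rightarrow> 'v set \<Rightarrow> bool" where
  "assoc_superalgebra scale mul A0 A1 \<longleftrightarrow>
     fin_dim_vs scale \<and>
     module.subspace scale A0 \<and> module.subspace scale A1 \<and>
     A0 \<inter> A1 = {0} \<and> (\<forall>v. \<exists>x\<in>A0. \<exists>y\<in>A1. v = x + y) \<and>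
     bilinear_on scale UNIV mul \<and>
     (\<forall>x y z. mul (mul x y) z = mul x (mul y z)) \<and>
     (\<forall>x\<in>A0. \<forall>y\<in>A0. mul x y \<in> A0) \<and> (\<forall>x\<in>A0. \<forall>y\<in>A1. mul x y \<in> A1) \<and>
     (\<forall>x\<in>A1. \<forall>y\<in>A0. mul x y \<in> A1) \<and> (\<forall>x\<in>A1. \<forall>y\<in>A1. mul x y \<in> A0)"

definition odd_symmetric_form ::
  "('k::field \<Rightarrow> 'v::ab_group_add \<Rightarrow> 'v) \<Rightarrow> ('v \<Rightarrow> 'v \<Rightarrow> 'v) \<Rightarrow> 'v set \<Rightarrow> 'v set
     \<Rightarrow> ('v \<Rightarrow> 'v \<Rightarrow> 'k) \<Rightarrow> bool" where
  "odd_symmetric_form scale mul A0 A1 B \<longleftrightarrow>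
     (\<forall>x y z. B (x + y) z = B x z + B y z \<and> B z (x + y) = B z x + B z y) \<and>
     (\<forall>c x y. B (scale c x) y = c * B x y \<and> B x (scale c y) = c * B x y) \<and>
     (\<forall>x\<in>A0. \<forall>y\<in>A0. B x y = 0) \<and> (\<forall>x\<in>A1. \<forall>y\<in>A1. B x y = 0) \<and>
     (\<forall>x\<in>A0. \<forall>y\<in>A0. B x y = B y x) \<and> (\<forall>x\<in>A0. \<forall>y\<in>A1. B x y = B y x) \<and>
     (\<forall>x\<in>A1. \<forall>y\<in>A0. B x y = B y x) \<and> (\<forall>x\<in>A1. \<forall>y\<in>A1. B x y = - B y x) \<and>
     (\<forall>x y z. B (mul x y) z = B x (mul y z)) \<and>
     (\<forall>x. (\<forall>y. B x y = 0) \<longrightarrow> x = 0)"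

definition graded_ideal ::
  "('k::field \<Rightarrow> 'v::ab_group_add \<Rightarrow> 'v) \<Rightarrow> ('v \<Rightarrow> 'v \<Rightarrow> 'v) \<Rightarrow> 'v set \<Rightarrow> 'v set \<Rightarrow> 'v set \<Rightarrow> bool" where
  "graded_ideal scale mul A0 A1 I \<longleftrightarrow>
     module.subspace scale I \<and>
     (\<forall>x\<in>I. \<exists>a\<in>I \<inter> A0. \<exists>b\<in>I \<inter> A1. x = a + b) \<and>
     (\<forall>a. \<forall>x\<in>I. mul a x \<in> I \<and> mul x a \<in> I)"

text \<open>B-irreducible (an irreducible object is by convention non-zero).\<close>
definition B_irreducible ::
  "('k::field \<Rightarrow> 'v::ab_group_add \<Rightarrow> 'v) \<Rightarrow> ('v \<Rightarrow> 'v \<Rightarrow> 'v) \<Rightarrow> 'v set \<Rightarrow> 'v set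
     \<Rightarrow> ('v \<Rightarrow> 'v \<Rightarrow> 'k) \<Rightarrow> bool" where
  "B_irreducible scale mul A0 A1 B \<longleftrightarrow>
     (UNIV :: 'v set) \<noteq> {0} \<and>
     (\<forall>I. graded_ideal scale mul A0 A1 I \<and> (\<forall>x\<in>I. (\<forall>y\<in>I. B x y = 0) \<longrightarrow> x = 0)
          \<longrightarrow> I = {0} \<or> I = UNIV)"

definition simple_superalgebra ::
  "('k::field \<Rightarrow> 'v::ab_group_add \<Rightarrow> 'v) \<Rightarrow> ('v \<Rightarrow> 'v \<Rightarrow> 'v) \<Rightarrow> 'v set \<Rightarrow> 'v set \<Rightarrow> bool" where
  "simple_superalgebra scale mul A0 A1 \<longleftrightarrow>
     (\<exists>x y. mul x y \<noteq> 0) \<and>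
     (\<forall>I. graded_ideal scale mul A0 A1 I \<longrightarrow> I = {0} \<or> I = UNIV)"

definition alg_ideal ::
  "('k::field \<Rightarrow> 'v::ab_group_add \<Rightarrow> 'v) \<Rightarrow> 'v set \<Rightarrow> ('v \<Rightarrow> 'v \<Rightarrow> 'v) \<Rightarrow> 'v set \<Rightarrow> bool" where
  "alg_ideal scale S m J \<longleftrightarrow>
     module.subspace scale J \<and> J \<subseteq> S \<and> (\<forall>a\<in>S. \<forall>x\<in>J. m a x \<in> J \<and> m x a \<in> J)"

fun lprod :: "('v \<Rightarrow> 'v \<Rightarrow> 'v) \<Rightarrow> 'v \<Rightarrow> 'v list \<Rightarrow> 'v" where
  "lprod m x [] = x"
| "lprod m x (y # ys) = lprod m (m x y) ys"

definition nilpotent_set :: "('v::zero \<Rightarrow> 'v \<Rightarrow> 'v) \<Rightarrow> 'v set \<Rightarrow> bool" where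
  "nilpotent_set m J \<longleftrightarrow>
     (\<exists>n>0. \<forall>x xs. x \<in> J \<and> set xs \<subseteq> J \<and> Suc (length xs) = n \<longrightarrow> lprod m x xs = 0)"

text \<open>Semisimple (finite-dimensional) associative algebra: no non-zero nilpotent
  two-sided ideal, i.e. zero (Jacobson) radical.\<close>
definition semisimple_alg ::
  "('k::field \<Rightarrow> 'v::ab_group_add \<Rightarrow> 'v) \<Rightarrow> 'v set \<Rightarrow> ('v \<Rightarrow> 'v \<Rightarrow> 'v) \<Rightarrow> bool" where
  "semisimple_alg scale S m \<longleftrightarrow>
     (\<forall>J. alg_ideal scale S m J \<and> nilpotent_set m J \<longrightarrow> J = {0})"

definition simple_assoc_alg ::
  "('k::field \<Rightarrow> 'v::ab_group_add \<Rightarrow> 'v) \<Rightarrow> 'v set \<Rightarrow> ('v \<Rightarrow> 'v \<Rightarrow> 'v) \<Rightarrow> bool" where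
  "simple_assoc_alg scale S m \<longleftrightarrow>
     module.subspace scale S \<and>
     (\<forall>x\<in>S. \<forall>y\<in>S. m x y \<in> S) \<and> bilinear_on scale S m \<and>
     (\<forall>x\<in>S. \<forall>y\<in>S. \<forall>z\<in>S. m (m x y) z = m x (m y z)) \<and>
     (\<exists>x\<in>S. \<exists>y\<in>S. m x y \<noteq> 0) \<and>
     (\<forall>J. alg_ideal scale S m J \<longrightarrow> J = {0} \<or> J = S)"

text \<open>Dual space S^*: linear functionals on S (extended by 0 outside S).\<close>
definition dual_space ::
  "('k::field \<Rightarrow> 'v::ab_group_add \<Rightarrow> 'v) \<Rightarrow> 'v set \<Rightarrow> ('v \<Rightarrow> 'k) set" where
  "dual_space scale S = {f. (\<forall>x\<in>S. \<forall>y\<in>S. f (x + y) = f x + f y) \<and>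
                            (\<forall>c. \<forall>x\<in>S. f (scale c x) = c * f x) \<and>
                            (\<forall>z. z \<notin> S \<longrightarrow> f z = 0)}"

definition sd_add :: "'v::ab_group_add \<times> ('v \<Rightarrow> 'k::field) \<Rightarrow> 'v \<times> ('v \<Rightarrow> 'k) \<Rightarrow> 'v \<times> ('v \<Rightarrow> 'k)" where
  "sd_add p q = (fst p + fst q, \<lambda>z. snd p z + snd q z)"

definition sd_scale :: "('k::field \<Rightarrow> 'v::ab_group_add \<Rightarrow> 'v) \<Rightarrow> 'k \<Rightarrow> 'v \<times> ('v \<Rightarrow> 'k) \<Rightarrow> 'v \<times> ('v \<Rightarrow> 'k)" where
  "sd_scale scale c p = (scale c (fst p), \<lambda>z. c * snd p z)"

text \<open>Product of the semi-direct product S \<oplus> P(S^*) by means of (L^*, R^*):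
  (x + f)(y + h) = xy + L^*(x)(h) + R^*(y)(f), with L^*(x)(h) = h \<circ> R_x and
  R^*(y)(f) = f \<circ> L_y.\<close>
definition sd_mul :: "'v set \<Rightarrow> ('v \<Rightarrow> 'v \<Rightarrow> 'v) \<Rightarrow>
    'v \<times> ('v \<Rightarrow> 'k::field) \<Rightarrow> 'v \<times> ('v \<Rightarrow> 'k) \<Rightarrow> 'v \<times> ('v \<Rightarrow> 'k)" where
  "sd_mul S m p q =
     (m (fst p) (fst q),
      \<lambda>z. if z \<in> S then snd q (m z (fst p)) + snd p (m (fst q) z) else 0)"

end

theory Submission
  imports Defs
begin

text \<open>Being odd and non-degenerate, \<open>B\<close> pairs \<open>A1\<close> perfectly with \<open>A0\<close>, so \<open>a \<mapsto> B(-, a)\<close>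
  identifies \<open>A1\<close> with \<open>A0\<^sup>*\<close>; what has to be shown is that \<open>A1 A1 = 0\<close> and that \<open>A0\<close> is
  simple, for then \<open>x + a \<mapsto> (x, B(-, a))\<close> is an isomorphism onto \<open>A0 \<oplus> P(A0\<^sup>*)\<close>.

  Every ideal \<open>M\<close> of the semisimple algebra \<open>A0\<close> has a central unit (built from idempotents
  via Brauer's lemma), so \<open>A0 = M \<oplus> Ann M\<close>. Non-simplicity and \<open>B\<close>-irreducibility give a
  non-zero square-zero graded ideal, which lies in \<open>T = {t \<in> A1. A1 t = t A1 = 0}\<close>. For
  \<open>M = A0 \<inter> T\<^sup>\<bottom>\<close> the graded ideal \<open>Ann M + T\<close> is non-degenerate, hence equal to \<open>A\<close>,
  so \<open>A1 = T\<close>; for a non-zero ideal \<open>J\<close> of \<open>A0\<close> the same argument with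
  \<open>J + (A1 \<inter> (Ann J)\<^sup>\<bottom>)\<close> gives \<open>J = A0\<close>.\<close>

lemma (in vector_space) subspace_linear_image:
  assumes "subspace L" "\<And>a b. h (a + b) = h a + h b" "\<And>c a. h (scale c a) = scale c (h a)"
  shows "subspace (h ` L)"
proof -
  interpret module_hom scale scale h
    by unfold_locales (use assms(2,3) in auto)
  show ?thesis by (rule subspace_image[OF assms(1)])
qed

definition (in vector_space) bilinear_form :: "('b \<Rightarrow> 'b \<Rightarrow> 'a) \<Rightarrow> bool" where
  "bilinear_form P \<longleftrightarrow>
     (\<forall>x y z. P (x + y) z = P x z + P y z \<and> P z (x + y) = P z x + P z y) \<and>
     (\<forall>c x y. P (scale c x) y = c * P x y \<and> P x (scale c y) = c * P x y)"

context finite_dimensional_vector_space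
begin

lemma bilinear_form_zero_left: "bilinear_form P \<Longrightarrow> P 0 y = 0"
  unfolding bilinear_form_def using scale_zero_left by (metis mult_zero_left)

lemma bilinear_form_swap: "bilinear_form P \<Longrightarrow> bilinear_form (\<lambda>x y. P y x)"
  unfolding bilinear_form_def by simp

lemma pairing_coordinates:
  assumes P: "bilinear_form P" and bs: "independent bs" "span bs = S"
    and U: "subspace U" and nondeg: "\<And>u. u \<in> U \<Longrightarrow> (\<And>s. s \<in> S \<Longrightarrow> P s u = 0) \<Longrightarrow> u = 0"
  defines "\<theta> \<equiv> \<lambda>u. \<Sum>b\<in>bs. scale (P b u) b"
  shows "Vector_Spaces.linear scale scale \<theta>" "\<theta> ` U \<subseteq> S" "dim (\<theta> ` U) = dim U"
proof -
  show lin: "Vector_Spaces.linear scale scale \<theta>"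
    using P unfolding Vector_Spaces.linear_iff \<theta>_def bilinear_form_def
    by (simp add: scale_left_distrib sum.distrib scale_sum_right vector_space_axioms)
  show "\<theta> ` U \<subseteq> S"
    unfolding \<theta>_def bs(2)[symmetric] by (auto intro: span_sum span_scale span_base)
  interpret \<theta>: Vector_Spaces.linear scale scale \<theta>
    by (rule lin)
  interpret pair: finite_dimensional_vector_space_pair_1 scale Basis scale
    by unfold_locales (simp_all add: finite_Basis independent_Basis span_Basis)
  have "u = 0" if "u \<in> U" "\<theta> u = 0" for u
  proof (rule nondeg[OF that(1)])
    have zero: "\<forall>b\<in>bs. P b u = 0"
      using bs(1) that(2) unfolding independent_explicit \<theta>_def by (auto dest!: spec[where x="\<lambda>b. P b u"])
    show "P s u = 0" if "s \<in> S" for s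
      using that unfolding bs(2)[symmetric]
      by (induct rule: span_induct_alt)
        (use zero P bilinear_form_zero_left[OF P] in \<open>simp_all add: bilinear_form_def\<close>)
  qed
  then have "inj_on \<theta> (span U)"
    unfolding span_eq_iff[THEN iffD2, OF U] using \<theta>.inj_on_iff_eq_0[OF U] by blast
  then show "dim (\<theta> ` U) = dim U"
    using pair.dim_image_eq[OF lin] by simp
qed

lemma dim_le_of_nondegenerate_pairing:
  assumes P: "bilinear_form P" and S: "subspace S" and U: "subspace U"
    and nondeg: "\<And>u. u \<in> U \<Longrightarrow> (\<And>s. s \<in> S \<Longrightarrow> P s u = 0) \<Longrightarrow> u = 0"
  shows "dim U \<le> dim S"
proof -
  obtain bs where bs: "bs \<subseteq> S" "independent bs" "S \<subseteq> span bs"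
    by (rule basis_exists[of S])
  then have "span bs = S"
    using span_minimal[OF bs(1) S] by auto
  note \<theta> = pairing_coordinates[OF P bs(2) this U nondeg]
  then show ?thesis
    using dim_subset[OF \<theta>(2)] by simp
qed

text \<open>Both coordinate maps are injective, so \<open>dim S = dim U\<close> and the coordinates of \<open>U\<close>
  exhaust \<open>S\<close>.\<close>
lemma nondegenerate_pairing_represents:
  assumes P: "bilinear_form P" and S: "subspace S" and U: "subspace U"
    and nondeg_U: "\<And>u. u \<in> U \<Longrightarrow> (\<And>s. s \<in> S \<Longrightarrow> P s u = 0) \<Longrightarrow> u = 0"
    and nondeg_S: "\<And>s. s \<in> S \<Longrightarrow> (\<And>u. u \<in> U \<Longrightarrow> P s u = 0) \<Longrightarrow> s = 0"
    and f: "\<forall>x\<in>S. \<forall>y\<in>S. f (x + y) = f x + f y" "\<forall>c. \<forall>x\<in>S. f (scale c x) = c * f x"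
  shows "\<exists>u\<in>U. \<forall>s\<in>S. P s u = f s"
proof -
  obtain bs where bs: "bs \<subseteq> S" "independent bs" "S \<subseteq> span bs"
    by (rule basis_exists[of S])
  then have span_bs: "span bs = S"
    using span_minimal[OF bs(1) S] by auto
  define \<theta> where "\<theta> u = (\<Sum>b\<in>bs. scale (P b u) b)" for u
  note \<theta> = pairing_coordinates[OF P bs(2) span_bs U nondeg_U, folded \<theta>_def]
  interpret \<theta>: Vector_Spaces.linear scale scale \<theta>
    by (rule \<theta>(1))
  have "dim S \<le> dim U"
    using dim_le_of_nondegenerate_pairing[OF bilinear_form_swap[OF P] U S] nondeg_S by blast
  then have "\<theta> ` U = S"
    using subspace_dim_equal[OF \<theta>.subspace_image[OF U] S \<theta>(2)] \<theta>(3) by simp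
  moreover have "(\<Sum>b\<in>bs. scale (f b) b) \<in> S"
    unfolding span_bs[symmetric] by (auto intro: span_sum span_scale span_base)
  ultimately obtain u where u: "u \<in> U" "\<theta> u = (\<Sum>b\<in>bs. scale (f b) b)"
    by (metis imageE)
  have "(\<Sum>b\<in>bs. scale (P b u - f b) b) = 0"
    using u(2) unfolding \<theta>_def by (simp add: scale_left_diff_distrib sum_subtractf)
  then have coeff: "\<forall>b\<in>bs. P b u = f b"
    using bs(2) unfolding independent_explicit by force
  have "s \<in> S \<and> P s u = f s" if "s \<in> span bs" for s
    using that
  proof (induct rule: span_induct_alt)
    case base
    have "f 0 = 0"
      using f(1) subspace_0[OF S] by (metis add_cancel_right_right)
    then show ?case
      using bilinear_form_zero_left[OF P] subspace_0[OF S] by simp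
  next
    case (step c b s)
    have "b \<in> S" "scale c b \<in> S"
      using step(1) bs(1) subspace_scale[OF S] by auto
    then show ?case
      using step coeff f subspace_add[OF S] P unfolding bilinear_form_def by simp
  qed
  then show ?thesis
    using u(1) span_bs by blast
qed

end

locale associative_algebra = finite_dimensional_vector_space scale basis
  for scale :: "'k::field \<Rightarrow> 'v::ab_group_add \<Rightarrow> 'v" and basis :: "'v set" +
  fixes m :: "'v \<Rightarrow> 'v \<Rightarrow> 'v"
  assumes m_add_left: "m (x + y) z = m x z + m y z"
    and m_add_right: "m z (x + y) = m z x + m z y"
    and m_scale_left: "m (scale c x) y = scale c (m x y)"
    and m_scale_right: "m x (scale c y) = scale c (m x y)"
    and m_assoc: "m (m x y) z = m x (m y z)"
begin

lemma m_zero_left [simp]: "m 0 y = 0"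
  using m_add_left[of 0 0 y] by simp

lemma m_zero_right [simp]: "m y 0 = 0"
  using m_add_right[of y 0 0] by simp

lemma m_minus_left: "m (- x) y = - m x y"
  using m_add_left[of x "- x" y] by (simp add: eq_neg_iff_add_eq_0 add.commute)

lemma m_minus_right: "m y (- x) = - m y x"
  using m_add_right[of y x "- x"] by (simp add: eq_neg_iff_add_eq_0 add.commute)

lemma m_diff_left: "m (x - y) z = m x z - m y z"
  using m_add_left[of x "- y" z] m_minus_left by simp

lemma m_diff_right: "m z (x - y) = m z x - m z y"
  using m_add_right[of z x "- y"] m_minus_right by simp

lemmas m_linear = m_add_left m_add_right m_scale_left m_scale_right
  m_diff_left m_diff_right m_minus_left m_minus_right

lemma span_square_zero:
  assumes "\<And>g g'. g \<in> G \<Longrightarrow> g' \<in> G \<Longrightarrow> m g g' = 0" "u \<in> span G" "w \<in> span G"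
  shows "m u w = 0"
proof -
  have gw: "m g w = 0" if "g \<in> G" for g
    using assms(3) by (induct rule: span_induct_alt) (auto simp: m_linear assms(1) that)
  show ?thesis
    using assms(2) by (induct rule: span_induct_alt) (auto simp: m_linear gw)
qed

end

locale semiprime_subalgebra = associative_algebra scale basis m
  for scale :: "'k::field \<Rightarrow> 'v::ab_group_add \<Rightarrow> 'v" and basis m +
  fixes R :: "'v set"
  assumes subspace_R: "subspace R"
    and m_closed: "x \<in> R \<Longrightarrow> y \<in> R \<Longrightarrow> m x y \<in> R"
    and square_zero_ideal_trivial:
      "\<And>I. subspace I \<Longrightarrow> I \<subseteq> R \<Longrightarrow> \<forall>r\<in>R. \<forall>x\<in>I. m r x \<in> I \<and> m x r \<in> I
        \<Longrightarrow> \<forall>x\<in>I. \<forall>y\<in>I. m x y = 0 \<Longrightarrow> I \<subseteq> {0}"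
begin

definition left_ideal :: "'v set \<Rightarrow> bool" where
  "left_ideal L \<longleftrightarrow> subspace L \<and> L \<subseteq> R \<and> (\<forall>r\<in>R. \<forall>x\<in>L. m r x \<in> L)"

definition ideal :: "'v set \<Rightarrow> bool" where
  "ideal M \<longleftrightarrow> subspace M \<and> M \<subseteq> R \<and> (\<forall>r\<in>R. \<forall>x\<in>M. m r x \<in> M \<and> m x r \<in> M)"

lemma ideal_spanI:
  assumes "G \<subseteq> R" and closed: "\<And>r g. r \<in> R \<Longrightarrow> g \<in> G \<Longrightarrow> m r g \<in> span G \<and> m g r \<in> span G"
  shows "ideal (span G)"
proof -
  have "m r z \<in> span G \<and> m z r \<in> span G" if "r \<in> R" "z \<in> span G" for r z
    using that(2)
    by (induct rule: span_induct_alt)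
      (auto simp: m_linear span_zero span_add span_scale closed[OF that(1)])
  then show ?thesis
    unfolding ideal_def using span_minimal[OF assms(1) subspace_R] by auto
qed

lemma ideal_span_left_ideal_mult:
  assumes L: "left_ideal L"
  shows "ideal (span (L \<union> {m l y | l y. l \<in> L \<and> y \<in> R}))"
proof -
  have LR: "L \<subseteq> R" and cl: "\<And>r x. r \<in> R \<Longrightarrow> x \<in> L \<Longrightarrow> m r x \<in> L"
    using L unfolding left_ideal_def by auto
  let ?G = "L \<union> {m l y | l y. l \<in> L \<and> y \<in> R}"
  have closed: "m r g \<in> ?G \<and> m g r \<in> ?G" if r: "r \<in> R" and "g \<in> ?G" for r g
    using \<open>g \<in> ?G\<close>
  proof (elim UnE CollectE exE conjE)
    assume "g \<in> L"
    then show ?thesis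
      using cl r by blast
  next
    fix l y assume "g = m l y" "l \<in> L" "y \<in> R"
    then have "m r g = m (m r l) y" "m g r = m l (m y r)" "m r l \<in> L" "m y r \<in> R"
      using cl r m_closed by (simp_all add: m_assoc)
    then show ?thesis
      using \<open>l \<in> L\<close> \<open>y \<in> R\<close> by blast
  qed
  have "?G \<subseteq> R"
    using LR m_closed by auto
  then show ?thesis
  proof (rule ideal_spanI)
    fix r g assume "r \<in> R" "g \<in> ?G"
    then show "m r g \<in> span ?G \<and> m g r \<in> span ?G"
      using closed[of r g] by (simp add: span_base)
  qed
qed

text \<open>The two-sided ideal generated by a square-zero left ideal \<open>L\<close> is \<open>L + L R\<close>, and it
  is again square-zero.\<close>
lemma left_ideal_square_zero:
  assumes L: "left_ideal L" and sq: "\<forall>x\<in>L. \<forall>y\<in>L. m x y = 0"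
  shows "L \<subseteq> {0}"
proof -
  have cl: "\<And>r x. r \<in> R \<Longrightarrow> x \<in> L \<Longrightarrow> m r x \<in> L"
    using L unfolding left_ideal_def by auto
  let ?G = "L \<union> {m l y | l y. l \<in> L \<and> y \<in> R}"
  have GL: "m g l = 0" if "g \<in> ?G" "l \<in> L" for g l
    using \<open>g \<in> ?G\<close>
  proof (elim UnE CollectE exE conjE)
    fix l' y assume "g = m l' y" "l' \<in> L" "y \<in> R"
    then show ?thesis
      using sq cl[OF \<open>y \<in> R\<close> \<open>l \<in> L\<close>] by (simp add: m_assoc)
  qed (use sq that in blast)
  have "m g g' = 0" if "g \<in> ?G" "g' \<in> ?G" for g g'
    using \<open>g' \<in> ?G\<close>
  proof (elim UnE CollectE exE conjE)
    fix l y assume "g' = m l y" "l \<in> L"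
    then show ?thesis
      using GL[OF \<open>g \<in> ?G\<close> \<open>l \<in> L\<close>] by (simp add: m_assoc[symmetric])
  qed (use GL that in blast)
  then have "\<forall>x\<in>span ?G. \<forall>y\<in>span ?G. m x y = 0"
    using span_square_zero by blast
  then have "span ?G \<subseteq> {0}"
    using ideal_span_left_ideal_mult[OF L] square_zero_ideal_trivial unfolding ideal_def by blast
  then show ?thesis
    using span_superset[of ?G] by auto
qed

text \<open>Brauer's lemma: if \<open>y x \<noteq> 0\<close> in a minimal left ideal \<open>L\<close>, then \<open>L x = L\<close>, so
  \<open>e x = x\<close> for some \<open>e \<in> L\<close>, and \<open>e e - e\<close> lies in the left ideal \<open>{z \<in> L. z x = 0} \<noteq> L\<close>.\<close>
lemma minimal_left_ideal_idempotent:
  assumes L: "left_ideal L" "\<not> L \<subseteq> {0}"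
    and minimal: "\<And>L'. left_ideal L' \<Longrightarrow> \<not> L' \<subseteq> {0} \<Longrightarrow> L' \<subseteq> L \<Longrightarrow> L' = L"
  shows "\<exists>e\<in>L. e \<noteq> 0 \<and> m e e = e"
proof -
  have sL: "subspace L" and LR: "L \<subseteq> R" and cl: "\<And>r x. r \<in> R \<Longrightarrow> x \<in> L \<Longrightarrow> m r x \<in> L"
    using L(1) unfolding left_ideal_def by auto
  obtain x y where xy: "x \<in> L" "y \<in> L" "m y x \<noteq> 0"
    using left_ideal_square_zero[OF L(1)] L(2) by blast
  have "left_ideal ((\<lambda>z. m z x) ` L)"
    unfolding left_ideal_def
    using subspace_linear_image[OF sL, of "\<lambda>z. m z x"] cl LR xy(1)
    by (auto simp: m_linear m_assoc[symmetric])
  moreover have "(\<lambda>z. m z x) ` L \<subseteq> L"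
    using cl LR xy(1) by auto
  ultimately have "(\<lambda>z. m z x) ` L = L"
    using minimal xy by blast
  then obtain e where e: "e \<in> L" "m e x = x"
    using xy(1) by force
  define K where "K = {z \<in> L. m z x = 0}"
  have "left_ideal K"
    using sL LR cl unfolding left_ideal_def K_def subspace_def by (auto simp: m_linear m_assoc)
  moreover have "K \<noteq> L"
    using e xy unfolding K_def by auto
  ultimately have "K \<subseteq> {0}"
    using minimal unfolding K_def by blast
  moreover have "m e e - e \<in> K"
    using e cl LR subspace_diff[OF sL] unfolding K_def by (auto simp: m_linear m_assoc)
  ultimately have "m e e = e"
    by auto
  moreover have "e \<noteq> 0"
    using e(2) xy(3) by auto
  ultimately show ?thesis
    using e(1) by blast
qed

lemma left_ideal_idempotent:
  assumes "left_ideal L" "\<not> L \<subseteq> {0}"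
  shows "\<exists>e\<in>L. e \<noteq> 0 \<and> m e e = e"
  using assms
proof (induct "dim L" arbitrary: L rule: less_induct)
  case less
  show ?case
  proof (cases "\<exists>L'. left_ideal L' \<and> \<not> L' \<subseteq> {0} \<and> L' \<subseteq> L \<and> dim L' < dim L")
    case True
    then obtain L' where "left_ideal L'" "\<not> L' \<subseteq> {0}" "L' \<subseteq> L" "dim L' < dim L"
      by blast
    then show ?thesis
      using less(1)[of L'] by blast
  next
    case False
    have "L' = L" if L': "left_ideal L'" "\<not> L' \<subseteq> {0}" "L' \<subseteq> L" for L'
    proof (rule subspace_dim_equal)
      show "subspace L'" "subspace L"
        using L' less(2) unfolding left_ideal_def by auto
      show "L' \<subseteq> L" "dim L \<le> dim L'"
        using False L' by auto
    qed
    then show ?thesis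
      using minimal_left_ideal_idempotent less(2,3) by blast
  qed
qed

lemma idempotent_join:
  assumes e: "m e e = e" and f: "m f f = f" and fe: "m f e = 0"
  defines "g \<equiv> e + f - m e f"
  shows "m e g = e" "m f g = f" "m g g = g"
proof -
  show eg: "m e g = e"
    using e by (simp add: g_def m_linear m_assoc[symmetric])
  show fg: "m f g = f"
    using f fe by (simp add: g_def m_linear m_assoc[symmetric])
  have "m g g = m e g + m f g - m e (m f g)"
    by (simp add: g_def m_linear m_assoc)
  then show "m g g = g"
    unfolding eg fg by (simp add: g_def)
qed

lemma left_multiples_idempotent_join:
  assumes "e \<in> R" "f \<in> R" and e: "m e e = e" and f: "m f f = f" and fe: "m f e = 0" "f \<noteq> 0"
  shows "(\<lambda>r. m r e) ` R \<subset> (\<lambda>r. m r (e + f - m e f)) ` R"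
proof -
  note g = idempotent_join[OF e f fe(1)]
  have "(\<lambda>r. m r e) ` R \<subseteq> (\<lambda>r. m r (e + f - m e f)) ` R"
  proof
    fix z assume "z \<in> (\<lambda>r. m r e) ` R"
    then obtain r where r: "r \<in> R" "z = m r e"
      by blast
    then have "z = m (m r e) (e + f - m e f)" and "m r e \<in> R"
      using g(1) m_closed \<open>e \<in> R\<close> by (auto simp: m_assoc)
    then show "z \<in> (\<lambda>r. m r (e + f - m e f)) ` R"
      by blast
  qed
  moreover have "f \<in> (\<lambda>r. m r (e + f - m e f)) ` R"
    using g(2) \<open>f \<in> R\<close> by force
  moreover have "f \<notin> (\<lambda>r. m r e) ` R"
  proof
    assume "f \<in> (\<lambda>r. m r e) ` R"
    then obtain r where "f = m r e"
      by blast
    then have "m f e = f"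
      using e by (simp add: m_assoc)
    then show False
      using fe by simp
  qed
  ultimately show ?thesis
    by blast
qed

lemma left_ideal_right_defect:
  assumes M: "ideal M" and "e \<in> M"
  shows "left_ideal ((\<lambda>x. x - m x e) ` M)"
proof -
  have sM: "subspace M" and cl: "\<And>r x. r \<in> R \<Longrightarrow> x \<in> M \<Longrightarrow> m r x \<in> M \<and> m x r \<in> M"
    and MR: "M \<subseteq> R"
    using M unfolding ideal_def by auto
  have "(\<lambda>x. x - m x e) ` M \<subseteq> M"
    using cl MR \<open>e \<in> M\<close> subspace_diff[OF sM] by blast
  then show ?thesis
    unfolding left_ideal_def
    using subspace_linear_image[OF sM, of "\<lambda>x. x - m x e"] MR cl
    by (auto simp: m_linear m_assoc[symmetric] scale_right_diff_distrib)
qed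

text \<open>Among the idempotents of \<open>M\<close> take one, \<open>e\<close>, with \<open>R e\<close> of maximal dimension. If \<open>e\<close>
  were no right unit, an idempotent \<open>f\<close> of the left ideal \<open>{x - x e}\<close> would give
  the idempotent \<open>e + f - e f\<close> with larger \<open>R (e + f - e f)\<close>.\<close>
lemma ideal_right_unit:
  assumes M: "ideal M"
  shows "\<exists>e\<in>M. \<forall>x\<in>M. m x e = x"
proof -
  have sM: "subspace M" and MR: "M \<subseteq> R" and cl: "\<And>r x. r \<in> R \<Longrightarrow> x \<in> M \<Longrightarrow> m x r \<in> M"
    using M unfolding ideal_def by auto
  define D where "D e = (\<lambda>r. m r e) ` R" for e
  have sD: "subspace (D e)" for e
    unfolding D_def by (rule subspace_linear_image[OF subspace_R]) (simp_all add: m_linear)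
  obtain e where e: "e \<in> M" "m e e = e"
    and emax: "\<And>g. g \<in> M \<Longrightarrow> m g g = g \<Longrightarrow> dim (D g) \<le> dim (D e)"
    using Lattices_Big.ex_has_greatest_nat[of "\<lambda>e. e \<in> M \<and> m e e = e" 0 "\<lambda>e. dim (D e)"
        "Suc dimension"] subspace_0[OF sM] dim_subset_UNIV
    by (force simp: less_Suc_eq_le)
  show ?thesis
  proof (rule bexI[OF _ e(1)], rule ccontr)
    assume "\<not> (\<forall>x\<in>M. m x e = x)"
    then have "\<not> (\<lambda>x. x - m x e) ` M \<subseteq> {0}"
      by force
    then obtain f where f: "f \<in> (\<lambda>x. x - m x e) ` M" "f \<noteq> 0" "m f f = f"
      using left_ideal_idempotent left_ideal_right_defect[OF M e(1)] by blast
    have fe: "m f e = 0"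
      using f(1) e(2) by (auto simp: m_linear m_assoc)
    obtain x where x: "x \<in> M" "f = x - m x e"
      using f(1) by blast
    have fM: "f \<in> M"
      using x cl[of e x] MR e(1) subspace_diff[OF sM] by auto
    then have fR: "f \<in> R"
      using MR by blast
    have "e + f - m e f \<in> M"
      by (intro subspace_diff[OF sM] subspace_add[OF sM] fM e(1) cl[OF fR e(1)])
    moreover have "m (e + f - m e f) (e + f - m e f) = e + f - m e f"
      using idempotent_join[OF e(2) f(3) fe] by blast
    moreover have "dim (D e) < dim (D (e + f - m e f))"
      using left_multiples_idempotent_join[OF _ fR e(2) f(3) fe f(2)] e(1) MR
        dim_psubset[of "D e"] span_eq_iff sD unfolding D_def by (metis subsetD)
    ultimately show False
      using emax by fastforce
  qed
qed

lemma opposite_subalgebra: "semiprime_subalgebra scale basis (\<lambda>x y. m y x) R"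
proof (unfold_locales)
  fix I assume "subspace I" "I \<subseteq> R" "\<forall>r\<in>R. \<forall>x\<in>I. m x r \<in> I \<and> m r x \<in> I"
    "\<forall>x\<in>I. \<forall>y\<in>I. m y x = 0"
  then show "I \<subseteq> {0}"
    using square_zero_ideal_trivial[of I] by blast
qed (auto simp: m_linear m_assoc subspace_R m_closed)

lemma ideal_unit:
  assumes M: "ideal M"
  shows "\<exists>e\<in>M. \<forall>x\<in>M. m x e = x \<and> m e x = x"
proof -
  interpret opposite: semiprime_subalgebra scale basis "\<lambda>x y. m y x" R
    by (rule opposite_subalgebra)
  have "opposite.ideal M"
    using M unfolding ideal_def opposite.ideal_def by blast
  then obtain e' where e': "e' \<in> M" "\<forall>x\<in>M. m e' x = x"
    using opposite.ideal_right_unit by blast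
  obtain e where e: "e \<in> M" "\<forall>x\<in>M. m x e = x"
    using ideal_right_unit[OF M] by blast
  have "e = e'"
    using e e' by metis
  then show ?thesis
    using e e' by blast
qed

definition annihilator :: "'v set \<Rightarrow> 'v set" where
  "annihilator M = {c \<in> R. \<forall>y\<in>M. m c y = 0 \<and> m y c = 0}"

lemma ideal_annihilator:
  assumes M: "ideal M"
  shows "ideal (annihilator M)"
proof -
  have cl: "\<And>r y. r \<in> R \<Longrightarrow> y \<in> M \<Longrightarrow> m r y \<in> M \<and> m y r \<in> M"
    using M unfolding ideal_def by auto
  have "m r c \<in> annihilator M \<and> m c r \<in> annihilator M" if "r \<in> R" "c \<in> annihilator M" for r c
  proof -
    have c: "c \<in> R" "\<And>y. y \<in> M \<Longrightarrow> m c y = 0 \<and> m y c = 0"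
      using that(2) unfolding annihilator_def by auto
    have "m (m r c) y = 0 \<and> m y (m r c) = 0 \<and> m (m c r) y = 0 \<and> m y (m c r) = 0" if "y \<in> M" for y
      using c(2)[OF that] c(2)[OF cl[OF \<open>r \<in> R\<close> that, THEN conjunct1]]
        c(2)[OF cl[OF \<open>r \<in> R\<close> that, THEN conjunct2]]
      by (simp add: m_assoc) (simp add: m_assoc[symmetric])
    then show ?thesis
      unfolding annihilator_def using m_closed c(1) \<open>r \<in> R\<close> by auto
  qed
  moreover have "subspace (annihilator M)"
    using subspace_R unfolding annihilator_def subspace_def by (auto simp: m_linear)
  ultimately show ?thesis
    unfolding ideal_def annihilator_def by auto
qed

text \<open>The unit \<open>e\<close> of an ideal \<open>M\<close> is central, so \<open>r = e r + (r - e r)\<close> splits \<open>R\<close> into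
  \<open>M\<close> and its annihilator.\<close>
lemma ideal_central_unit:
  assumes M: "ideal M"
  obtains e where "e \<in> M" "\<And>x. x \<in> M \<Longrightarrow> m x e = x"
    "\<And>r. r \<in> R \<Longrightarrow> m e r \<in> M" "\<And>r. r \<in> R \<Longrightarrow> r - m e r \<in> annihilator M"
proof -
  have MR: "M \<subseteq> R" and cl: "\<And>r x. r \<in> R \<Longrightarrow> x \<in> M \<Longrightarrow> m r x \<in> M \<and> m x r \<in> M"
    using M unfolding ideal_def by auto
  obtain e where e: "e \<in> M" "\<And>x. x \<in> M \<Longrightarrow> m x e = x \<and> m e x = x"
    using ideal_unit[OF M] by blast
  have central: "m e r = m r e" if "r \<in> R" for r
    using e(2)[of "m e r"] e(2)[of "m r e"] cl[OF that e(1)] by (simp add: m_assoc)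
  have "r - m e r \<in> annihilator M" if r: "r \<in> R" for r
  proof -
    have "m (r - m e r) y = 0 \<and> m y (r - m e r) = 0" if "y \<in> M" for y
      using e(2)[OF that] e(2)[of "m r y"] e(2)[of "m y r"] cl[OF r that] central[OF r]
      by (simp add: m_linear m_assoc)
    moreover have "r - m e r \<in> R"
      using r e(1) MR m_closed subspace_diff[OF subspace_R] by blast
    ultimately show ?thesis
      unfolding annihilator_def by blast
  qed
  then show ?thesis
    using that e cl by blast
qed

end

locale odd_symmetric_superalgebra = finite_dimensional_vector_space scale basis
  for scale :: "'k::field \<Rightarrow> 'v::ab_group_add \<Rightarrow> 'v" and basis :: "'v set" +
  fixes mul :: "'v \<Rightarrow> 'v \<Rightarrow> 'v" and A0 A1 :: "'v set" and B :: "'v \<Rightarrow> 'v \<Rightarrow> 'k"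
  assumes superalgebra: "assoc_superalgebra scale mul A0 A1"
    and odd_form: "odd_symmetric_form scale mul A0 A1 B"
begin

sublocale associative_algebra scale basis mul
  by unfold_locales (use superalgebra in \<open>auto simp: assoc_superalgebra_def bilinear_on_def\<close>)

lemma subspace_A0: "subspace A0"
  and subspace_A1: "subspace A1"
  and A0_inter_A1: "A0 \<inter> A1 = {0}"
  and grading: "\<exists>x\<in>A0. \<exists>y\<in>A1. v = x + y"
  using superalgebra unfolding assoc_superalgebra_def by auto

lemma mul_even_even: "x \<in> A0 \<Longrightarrow> y \<in> A0 \<Longrightarrow> mul x y \<in> A0"
  and mul_even_odd: "x \<in> A0 \<Longrightarrow> y \<in> A1 \<Longrightarrow> mul x y \<in> A1"
  and mul_odd_even: "x \<in> A1 \<Longrightarrow> y \<in> A0 \<Longrightarrow> mul x y \<in> A1"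
  and mul_odd_odd: "x \<in> A1 \<Longrightarrow> y \<in> A1 \<Longrightarrow> mul x y \<in> A0"
  using superalgebra unfolding assoc_superalgebra_def by auto

lemma B_bilinear: "bilinear_form B"
  using odd_form unfolding odd_symmetric_form_def bilinear_form_def by auto

lemma B_even_even: "x \<in> A0 \<Longrightarrow> y \<in> A0 \<Longrightarrow> B x y = 0"
  and B_odd_odd: "x \<in> A1 \<Longrightarrow> y \<in> A1 \<Longrightarrow> B x y = 0"
  and B_assoc: "B (mul x y) z = B x (mul y z)"
  and B_nondeg: "(\<And>y. B x y = 0) \<Longrightarrow> x = 0"
  using odd_form unfolding odd_symmetric_form_def by auto

lemma B_add_left: "B (x + y) z = B x z + B y z"
  and B_add_right: "B z (x + y) = B z x + B z y"
  and B_scale_left: "B (scale c x) y = c * B x y"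
  and B_scale_right: "B x (scale c y) = c * B x y"
  using B_bilinear unfolding bilinear_form_def by auto

lemma B_zero_left [simp]: "B 0 y = 0"
  using bilinear_form_zero_left[OF B_bilinear] .

lemma B_zero_right [simp]: "B y 0 = 0"
  using bilinear_form_zero_left[OF bilinear_form_swap[OF B_bilinear]] .

lemma B_diff_left: "B (x - y) z = B x z - B y z"
  using B_add_left[of "x - y" y z] by (simp add: algebra_simps)

lemma B_diff_right: "B z (x - y) = B z x - B z y"
  using B_add_right[of z "x - y" y] by (simp add: algebra_simps)

lemmas B_linear = B_add_left B_add_right B_scale_left B_scale_right B_diff_left B_diff_right

text \<open>Since \<open>B\<close> vanishes on \<open>A0 \<times> A0\<close> and \<open>A1 \<times> A1\<close>, the sign of supersymmetry never
  shows: \<open>B\<close> is symmetric.\<close>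
lemma B_sym: "B u w = B w u"
proof -
  have sym: "B x y = B y x" if "x \<in> A0" "y \<in> A1" for x y
    using odd_form that unfolding odd_symmetric_form_def by blast
  obtain u0 u1 where u: "u0 \<in> A0" "u1 \<in> A1" "u = u0 + u1"
    using grading by blast
  obtain w0 w1 where w: "w0 \<in> A0" "w1 \<in> A1" "w = w0 + w1"
    using grading by blast
  show ?thesis
    using u w sym[of u0 w1] sym[of w0 u1]
    by (simp add: B_linear B_even_even B_odd_odd)
qed

lemma B_nondeg_even:
  assumes "x \<in> A0" "\<And>a. a \<in> A1 \<Longrightarrow> B x a = 0"
  shows "x = 0"
proof (rule B_nondeg)
  fix y
  obtain y0 y1 where "y0 \<in> A0" "y1 \<in> A1" "y = y0 + y1"
    using grading by blast
  then show "B x y = 0"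
    using assms B_even_even by (simp add: B_linear)
qed

lemma B_nondeg_odd:
  assumes "a \<in> A1" "\<And>x. x \<in> A0 \<Longrightarrow> B x a = 0"
  shows "a = 0"
proof (rule B_nondeg)
  fix y
  obtain y0 y1 where "y0 \<in> A0" "y1 \<in> A1" "y = y0 + y1"
    using grading by blast
  then show "B a y = 0"
    using assms B_odd_odd B_sym[of a y0] by (simp add: B_linear)
qed

definition even_part :: "'v \<Rightarrow> 'v" where
  "even_part v = (SOME x. x \<in> A0 \<and> v - x \<in> A1)"

definition odd_part :: "'v \<Rightarrow> 'v" where
  "odd_part v = v - even_part v"

lemma even_part: "even_part v \<in> A0"
  and odd_part: "odd_part v \<in> A1"
  and even_plus_odd: "even_part v + odd_part v = v"
proof -
  obtain x y where "x \<in> A0" "y \<in> A1" "v = x + y"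
    using grading by blast
  then have "\<exists>x. x \<in> A0 \<and> v - x \<in> A1"
    by (intro exI[of _ x]) simp
  then have "even_part v \<in> A0 \<and> v - even_part v \<in> A1"
    unfolding even_part_def by (rule someI_ex)
  then show "even_part v \<in> A0" "odd_part v \<in> A1" "even_part v + odd_part v = v"
    unfolding odd_part_def by auto
qed

lemma parts_unique:
  assumes "x \<in> A0" "y \<in> A1"
  shows "even_part (x + y) = x" "odd_part (x + y) = y"
proof -
  have "x - even_part (x + y) = odd_part (x + y) - y"
    using even_plus_odd[of "x + y"] by (simp add: algebra_simps)
  moreover have "x - even_part (x + y) \<in> A0" "odd_part (x + y) - y \<in> A1"
    using assms even_part odd_part subspace_diff subspace_A0 subspace_A1 by auto
  ultimately have "x - even_part (x + y) = 0"
    using A0_inter_A1 by (metis IntI singletonD)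
  then show "even_part (x + y) = x"
    by simp
  then show "odd_part (x + y) = y"
    unfolding odd_part_def by simp
qed

lemma parts_even: "x \<in> A0 \<Longrightarrow> even_part x = x \<and> odd_part x = 0"
  using parts_unique[of x 0] subspace_0[OF subspace_A1] by simp

lemma parts_odd: "a \<in> A1 \<Longrightarrow> even_part a = 0 \<and> odd_part a = a"
  using parts_unique[of 0 a] subspace_0[OF subspace_A0] by simp

lemma parts_add:
  "even_part (x + y) = even_part x + even_part y" "odd_part (x + y) = odd_part x + odd_part y"
proof -
  have "x + y = (even_part x + even_part y) + (odd_part x + odd_part y)"
    using even_plus_odd[of x] even_plus_odd[of y] by (simp add: algebra_simps)
  then show "even_part (x + y) = even_part x + even_part y" "odd_part (x + y) = odd_part x + odd_part y"
    using parts_unique subspace_add subspace_A0 subspace_A1 even_part odd_part by metis+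
qed

lemma parts_scale:
  "even_part (scale c x) = scale c (even_part x)" "odd_part (scale c x) = scale c (odd_part x)"
proof -
  have "scale c x = scale c (even_part x) + scale c (odd_part x)"
    using even_plus_odd[of x] by (metis scale_right_distrib)
  then show "even_part (scale c x) = scale c (even_part x)"
    "odd_part (scale c x) = scale c (odd_part x)"
    using parts_unique subspace_scale subspace_A0 subspace_A1 even_part odd_part by metis+
qed

lemma graded_ideal_sum:
  assumes X: "subspace X" "X \<subseteq> A0" and Y: "subspace Y" "Y \<subseteq> A1"
    and even_X: "\<And>u x. u \<in> A0 \<Longrightarrow> x \<in> X \<Longrightarrow> mul u x \<in> X \<and> mul x u \<in> X"
    and odd_X: "\<And>u x. u \<in> A1 \<Longrightarrow> x \<in> X \<Longrightarrow> mul u x \<in> Y \<and> mul x u \<in> Y"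
    and even_Y: "\<And>u y. u \<in> A0 \<Longrightarrow> y \<in> Y \<Longrightarrow> mul u y \<in> Y \<and> mul y u \<in> Y"
    and odd_Y: "\<And>u y. u \<in> A1 \<Longrightarrow> y \<in> Y \<Longrightarrow> mul u y = 0 \<and> mul y u = 0"
  shows "graded_ideal scale mul A0 A1 {x + y | x y. x \<in> X \<and> y \<in> Y}"
proof -
  let ?I = "{x + y | x y. x \<in> X \<and> y \<in> Y}"
  have X_I: "X \<subseteq> ?I" and Y_I: "Y \<subseteq> ?I"
    using subspace_0[OF X(1)] subspace_0[OF Y(1)] by force+
  have "mul u v \<in> ?I \<and> mul v u \<in> ?I" if "v \<in> ?I" for u v
  proof -
    obtain x y where v: "x \<in> X" "y \<in> Y" "v = x + y"
      using \<open>v \<in> ?I\<close> by blast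
    obtain u0 u1 where u: "u0 \<in> A0" "u1 \<in> A1" "u = u0 + u1"
      using grading by blast
    have "mul u v = mul u0 x + (mul u1 x + mul u0 y)" "mul v u = mul x u0 + (mul x u1 + mul y u0)"
      using u v odd_Y[OF u(2) v(2)] by (simp_all add: m_linear algebra_simps)
    then show ?thesis
      using even_X[OF u(1) v(1)] odd_X[OF u(2) v(1)] even_Y[OF u(1) v(2)] subspace_add[OF Y(1)]
      by blast
  qed
  moreover have "\<exists>a\<in>?I \<inter> A0. \<exists>b\<in>?I \<inter> A1. v = a + b" if "v \<in> ?I" for v
    using that X_I Y_I X(2) Y(2) by blast
  ultimately show ?thesis
    unfolding graded_ideal_def using subspace_sums[OF X(1) Y(1)] by blast
qed

lemma graded_sum_UNIV:
  assumes "X \<subseteq> A0" "Y \<subseteq> A1" and sum: "{x + y | x y. x \<in> X \<and> y \<in> Y} = UNIV"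
  shows "A0 \<subseteq> X" "A1 \<subseteq> Y"
proof -
  have "x \<in> X \<and> y \<in> Y" if "x \<in> A0" "y \<in> A1" for x y
  proof -
    have "x + y \<in> {x + y | x y. x \<in> X \<and> y \<in> Y}"
      unfolding sum by simp
    then obtain x' y' where x'y': "x' \<in> X" "y' \<in> Y" "x + y = x' + y'"
      by blast
    then have "x' \<in> A0" "y' \<in> A1"
      using assms(1,2) by auto
    then have "x = x'" "y = y'"
      using parts_unique[OF that] parts_unique[of x' y'] x'y'(3) by metis+
    then show ?thesis
      using x'y' by simp
  qed
  then show "A0 \<subseteq> X" "A1 \<subseteq> Y"
    using subspace_0[OF subspace_A0] subspace_0[OF subspace_A1] by auto
qed

definition orth :: "'v set \<Rightarrow> 'v set" where
  "orth X = {v. \<forall>w\<in>X. B v w = 0}"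

lemma subspace_orth: "subspace (orth X)"
  unfolding orth_def subspace_def by (simp add: B_linear)

definition odd_functional :: "'v \<Rightarrow> 'v \<Rightarrow> 'k" where
  "odd_functional a = (\<lambda>z. if z \<in> A0 then B z a else 0)"

lemma odd_functional_dual: "odd_functional a \<in> dual_space scale A0"
  unfolding dual_space_def odd_functional_def
  using subspace_add[OF subspace_A0] subspace_scale[OF subspace_A0] by (auto simp: B_linear)

lemma odd_functional_inj: "inj_on odd_functional A1"
proof (rule inj_onI)
  fix a b assume ab: "a \<in> A1" "b \<in> A1" "odd_functional a = odd_functional b"
  have "a - b = 0"
  proof (rule B_nondeg_odd)
    show "a - b \<in> A1"
      using ab subspace_diff[OF subspace_A1] by blast
    show "B x (a - b) = 0" if "x \<in> A0" for x
      using fun_cong[OF ab(3), of x] that unfolding odd_functional_def by (simp add: B_linear)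
  qed
  then show "a = b"
    by simp
qed

lemma odd_functional_onto:
  assumes "f \<in> dual_space scale A0"
  shows "\<exists>a\<in>A1. odd_functional a = f"
proof -
  have f: "\<forall>x\<in>A0. \<forall>y\<in>A0. f (x + y) = f x + f y" "\<forall>c. \<forall>x\<in>A0. f (scale c x) = c * f x"
    "\<And>z. z \<notin> A0 \<Longrightarrow> f z = 0"
    using assms unfolding dual_space_def by auto
  obtain a where "a \<in> A1" "\<forall>z\<in>A0. B z a = f z"
    using nondegenerate_pairing_represents[OF B_bilinear subspace_A0 subspace_A1
        B_nondeg_odd B_nondeg_even f(1,2)] by blast
  then show ?thesis
    unfolding odd_functional_def using f(3) by (intro bexI[of _ a]) auto
qed

definition to_semidirect :: "'v \<Rightarrow> 'v \<times> ('v \<Rightarrow> 'k)" where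
  "to_semidirect v = (even_part v, odd_functional (odd_part v))"

lemma odd_functional_zero: "odd_functional 0 = (\<lambda>_. 0)"
  unfolding odd_functional_def by auto

lemma to_semidirect_add: "to_semidirect (x + y) = sd_add (to_semidirect x) (to_semidirect y)"
  unfolding to_semidirect_def sd_add_def odd_functional_def by (auto simp: parts_add B_linear)

lemma to_semidirect_scale: "to_semidirect (scale c x) = sd_scale scale c (to_semidirect x)"
  unfolding to_semidirect_def sd_scale_def odd_functional_def by (auto simp: parts_scale B_linear)

lemma to_semidirect_sum:
  assumes "x \<in> A0" "a \<in> A1"
  shows "to_semidirect (x + a) = (x, odd_functional a)"
  unfolding to_semidirect_def using parts_unique[OF assms] by simp

lemma to_semidirect_bij: "bij_betw to_semidirect UNIV (A0 \<times> dual_space scale A0)"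
  unfolding bij_betw_def
proof
  show "inj to_semidirect"
  proof (rule injI)
    fix x y assume "to_semidirect x = to_semidirect y"
    then have "even_part x = even_part y" "odd_part x = odd_part y"
      using odd_functional_inj odd_part unfolding to_semidirect_def inj_on_def by auto
    then show "x = y"
      by (metis even_plus_odd)
  qed
  have "(x, f) \<in> range to_semidirect" if "x \<in> A0" "f \<in> dual_space scale A0" for x f
    using odd_functional_onto[OF that(2)] to_semidirect_sum[OF that(1)] by (metis rangeI)
  then show "range to_semidirect = A0 \<times> dual_space scale A0"
    unfolding to_semidirect_def using even_part odd_functional_dual by auto
qed

lemma to_semidirect_even: "to_semidirect ` A0 = A0 \<times> {\<lambda>_. 0}"
proof -
  have "to_semidirect x = (x, \<lambda>_. 0)" if "x \<in> A0" for x
    unfolding to_semidirect_def using parts_even[OF that] odd_functional_zero by simp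
  then show ?thesis
    by force
qed

lemma to_semidirect_odd: "to_semidirect ` A1 = {0} \<times> dual_space scale A0"
proof -
  have "to_semidirect a = (0, odd_functional a)" if "a \<in> A1" for a
    unfolding to_semidirect_def using parts_odd[OF that] by simp
  then show ?thesis
    using odd_functional_onto odd_functional_dual by force
qed

end

locale nonsimple_irreducible_superalgebra = odd_symmetric_superalgebra scale basis mul A0 A1 B
  for scale :: "'k::field \<Rightarrow> 'v::ab_group_add \<Rightarrow> 'v" and basis mul A0 A1 B +
  assumes irreducible: "B_irreducible scale mul A0 A1 B"
    and not_simple: "\<not> simple_superalgebra scale mul A0 A1"
    and even_semisimple: "semisimple_alg scale A0 mul"
begin

sublocale even: semiprime_subalgebra scale basis mul A0
proof unfold_locales
  fix I assume I: "subspace I" "I \<subseteq> A0" "\<forall>r\<in>A0. \<forall>x\<in>I. mul r x \<in> I \<and> mul x r \<in> I"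
    "\<forall>x\<in>I. \<forall>y\<in>I. mul x y = 0"
  have "alg_ideal scale A0 mul I"
    unfolding alg_ideal_def using I by auto
  moreover have "nilpotent_set mul I"
    unfolding nilpotent_set_def
  proof (intro exI[of _ 2] conjI allI impI)
    fix x xs assume "x \<in> I \<and> set xs \<subseteq> I \<and> Suc (length xs) = 2"
    then show "lprod mul x xs = 0"
      using I(4) by (cases xs) auto
  qed simp
  ultimately show "I \<subseteq> {0}"
    using even_semisimple unfolding semisimple_alg_def by blast
qed (auto simp: subspace_A0 mul_even_even)

lemma nondegenerate_graded_ideal_UNIV:
  assumes "graded_ideal scale mul A0 A1 I" "\<forall>x\<in>I. (\<forall>y\<in>I. B x y = 0) \<longrightarrow> x = 0" "I \<noteq> {0}"
  shows "I = UNIV"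
  using irreducible assms unfolding B_irreducible_def by blast

lemma even_nonzero: "\<exists>x\<in>A0. x \<noteq> 0"
proof (rule ccontr)
  assume "\<not> (\<exists>x\<in>A0. x \<noteq> 0)"
  then have odd: "v \<in> A1" for v
    using grading[of v] by auto
  then have "(v :: 'v) = 0" for v
    using B_nondeg B_odd_odd by blast
  then show False
    using irreducible unfolding B_irreducible_def by auto
qed

definition odd_annihilator :: "'v set" where
  "odd_annihilator = {t \<in> A1. \<forall>a\<in>A1. mul a t = 0 \<and> mul t a = 0}"

lemma subspace_odd_annihilator: "subspace odd_annihilator"
  using subspace_A1 unfolding odd_annihilator_def subspace_def by (auto simp: m_linear)

lemma odd_annihilator_even_mult:
  assumes "x \<in> A0" "t \<in> odd_annihilator"
  shows "mul x t \<in> odd_annihilator" "mul t x \<in> odd_annihilator"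
  using assms mul_even_odd mul_odd_even unfolding odd_annihilator_def
  by (auto simp: m_assoc) (metis m_assoc)+

lemma graded_ideal_radical:
  assumes I: "graded_ideal scale mul A0 A1 I"
  shows "graded_ideal scale mul A0 A1 (I \<inter> orth I)"
    and "x \<in> I \<inter> orth I \<Longrightarrow> y \<in> I \<inter> orth I \<Longrightarrow> mul x y = 0"
proof -
  have sI: "subspace I" and grI: "\<And>x. x \<in> I \<Longrightarrow> \<exists>a\<in>I \<inter> A0. \<exists>b\<in>I \<inter> A1. x = a + b"
    and clI: "\<And>a x. x \<in> I \<Longrightarrow> mul a x \<in> I \<and> mul x a \<in> I"
    using I unfolding graded_ideal_def by auto
  have rad: "mul u x \<in> I \<inter> orth I \<and> mul x u \<in> I \<inter> orth I" if "x \<in> I \<inter> orth I" for u x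
  proof -
    have x: "B x w' = 0" if "w' \<in> I" for w'
      using \<open>x \<in> I \<inter> orth I\<close> that unfolding orth_def by blast
    have "B (mul u x) w = 0 \<and> B (mul x u) w = 0" if "w \<in> I" for w
    proof
      have "B (mul u x) w = B x (mul w u)"
        by (metis B_assoc B_sym)
      then show "B (mul u x) w = 0"
        using x clI[OF that] by simp
      show "B (mul x u) w = 0"
        using x clI[OF that] by (simp add: B_assoc)
    qed
    then show ?thesis
      using clI that unfolding orth_def by blast
  qed
  show "mul x y = 0" if "x \<in> I \<inter> orth I" "y \<in> I \<inter> orth I"
  proof (rule B_nondeg)
    fix w
    have "mul y w \<in> I"
      using rad[OF that(2)] by blast
    then show "B (mul x y) w = 0"
      using that(1) unfolding orth_def by (simp add: B_assoc)
  qed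
  have "\<exists>a\<in>I \<inter> orth I \<inter> A0. \<exists>b\<in>I \<inter> orth I \<inter> A1. x = a + b" if x: "x \<in> I \<inter> orth I" for x
  proof -
    obtain a b where ab: "a \<in> I \<inter> A0" "b \<in> I \<inter> A1" "x = a + b"
      using grI x by blast
    have "B a w = 0 \<and> B b w = 0" if w: "w \<in> I" for w
    proof -
      obtain w0 w1 where w: "w0 \<in> I \<inter> A0" "w1 \<in> I \<inter> A1" "w = w0 + w1"
        using grI[OF w] by blast
      have "B a w0 = 0" "B b w1 = 0" "B x w0 = 0" "B x w1 = 0"
        using ab w x B_even_even B_odd_odd unfolding orth_def by auto
      then show ?thesis
        using ab(3) w(3) by (simp add: B_linear)
    qed
    then show ?thesis
      using ab unfolding orth_def by blast
  qed
  then show "graded_ideal scale mul A0 A1 (I \<inter> orth I)"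
    unfolding graded_ideal_def using subspace_inter[OF sI subspace_orth] rad by blast
qed

lemma square_zero_graded_ideal_odd_annihilator:
  assumes K: "graded_ideal scale mul A0 A1 K" and sq: "\<And>x y. x \<in> K \<Longrightarrow> y \<in> K \<Longrightarrow> mul x y = 0"
  shows "K \<subseteq> odd_annihilator"
proof -
  have sK: "subspace K" and grK: "\<And>x. x \<in> K \<Longrightarrow> \<exists>a\<in>K \<inter> A0. \<exists>b\<in>K \<inter> A1. x = a + b"
    and clK: "\<And>a x. x \<in> K \<Longrightarrow> mul a x \<in> K \<and> mul x a \<in> K"
    using K unfolding graded_ideal_def by auto
  have even_K: "K \<inter> A0 \<subseteq> {0}"
    using even.square_zero_ideal_trivial[OF subspace_inter[OF sK subspace_A0]] clK mul_even_even sq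
    by blast
  show ?thesis
  proof
    fix x assume "x \<in> K"
    then have "x \<in> A1"
      using grK even_K by fastforce
    moreover have "mul a x = 0 \<and> mul x a = 0" if "a \<in> A1" for a
      using even_K clK[OF \<open>x \<in> K\<close>] mul_odd_odd[OF that \<open>x \<in> A1\<close>] mul_odd_odd[OF \<open>x \<in> A1\<close> that]
      by blast
    ultimately show "x \<in> odd_annihilator"
      unfolding odd_annihilator_def using \<open>x \<in> K\<close> by blast
  qed
qed

text \<open>A proper non-zero graded ideal exists since \<open>A\<close> is not simple; by \<open>B\<close>-irreducibility its
  radical \<open>I \<inter> I\<^sup>\<bottom>\<close> is non-zero, and it is square-zero.\<close>
lemma odd_annihilator_nonzero: "\<exists>t\<in>odd_annihilator. t \<noteq> 0"
proof -
  have "\<exists>x y. mul x y \<noteq> 0"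
  proof (rule ccontr)
    assume "\<not> (\<exists>x y. mul x y \<noteq> 0)"
    then have "A0 \<subseteq> {0}"
      using even.square_zero_ideal_trivial[OF subspace_A0 order_refl] subspace_0[OF subspace_A0]
      by simp
    then show False
      using even_nonzero by blast
  qed
  then obtain I where I: "graded_ideal scale mul A0 A1 I" "I \<noteq> {0}" "I \<noteq> UNIV"
    using not_simple unfolding simple_superalgebra_def by blast
  then obtain x where "x \<in> I \<inter> orth I" "x \<noteq> 0"
    using nondegenerate_graded_ideal_UNIV unfolding orth_def by blast
  moreover have "I \<inter> orth I \<subseteq> odd_annihilator"
    by (rule square_zero_graded_ideal_odd_annihilator[OF graded_ideal_radical[OF I(1)]])
  ultimately show ?thesis
    by blast
qed

lemma ideal_even_orth_odd_annihilator: "even.ideal (A0 \<inter> orth odd_annihilator)"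
  unfolding even.ideal_def
proof (intro conjI ballI)
  show "subspace (A0 \<inter> orth odd_annihilator)"
    using subspace_inter[OF subspace_A0 subspace_orth] .
  fix r x assume r: "r \<in> A0" and x: "x \<in> A0 \<inter> orth odd_annihilator"
  have "B (mul r x) t = 0 \<and> B (mul x r) t = 0" if "t \<in> odd_annihilator" for t
  proof
    have "B (mul r x) t = B x (mul t r)"
      by (metis B_assoc B_sym)
    then show "B (mul r x) t = 0"
      using x odd_annihilator_even_mult(2)[OF r that] unfolding orth_def by simp
    show "B (mul x r) t = 0"
      using x odd_annihilator_even_mult(1)[OF r that] unfolding orth_def by (simp add: B_assoc)
  qed
  then show "mul r x \<in> A0 \<inter> orth odd_annihilator" "mul x r \<in> A0 \<inter> orth odd_annihilator"
    using r x mul_even_even unfolding orth_def by auto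
qed simp

lemma odd_mult_orth_odd_annihilator:
  assumes "a \<in> A1" "b \<in> A1"
  shows "mul a b \<in> A0 \<inter> orth odd_annihilator"
  using assms mul_odd_odd unfolding orth_def odd_annihilator_def by (auto simp: B_assoc)

lemma annihilator_odd_mult:
  assumes c: "c \<in> even.annihilator (A0 \<inter> orth odd_annihilator)" and a: "a \<in> A1"
  shows "mul a c \<in> odd_annihilator" "mul c a \<in> odd_annihilator"
proof -
  have cA: "c \<in> A0"
    and cM: "\<And>a b. a \<in> A1 \<Longrightarrow> b \<in> A1 \<Longrightarrow> mul c (mul a b) = 0 \<and> mul (mul a b) c = 0"
    using c odd_mult_orth_odd_annihilator unfolding even.annihilator_def by auto
  have "mul b (mul a c) = 0 \<and> mul (mul c a) b = 0" if "b \<in> A1" for b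
    using cM[OF that a] cM[OF a that] by (simp add: m_assoc)
  moreover have "mul (mul a c) b = 0 \<and> mul b (mul c a) = 0" if b: "b \<in> A1" for b
  proof
    show "mul (mul a c) b = 0"
    proof (rule B_nondeg_even)
      show "mul (mul a c) b \<in> A0"
        using mul_odd_odd mul_odd_even a cA b by blast
      show "B (mul (mul a c) b) d = 0" if "d \<in> A1" for d
        using cM[OF b that] by (simp add: B_assoc)
    qed
    show "mul b (mul c a) = 0"
    proof (rule B_nondeg_even)
      show "mul b (mul c a) \<in> A0"
        using mul_odd_odd mul_even_odd a cA b by blast
      show "B (mul b (mul c a)) d = 0" if "d \<in> A1" for d
        using cM[OF a that] by (simp add: B_assoc m_assoc)
    qed
  qed
  ultimately show "mul a c \<in> odd_annihilator" "mul c a \<in> odd_annihilator"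
    unfolding odd_annihilator_def using mul_odd_even mul_even_odd a cA by auto
qed

lemma annihilator_sum_nondegenerate:
  assumes c: "c \<in> even.annihilator (A0 \<inter> orth odd_annihilator)" and t: "t \<in> odd_annihilator"
    and orth_c: "\<And>c'. c' \<in> even.annihilator (A0 \<inter> orth odd_annihilator) \<Longrightarrow> B (c + t) c' = 0"
    and orth_t: "\<And>t'. t' \<in> odd_annihilator \<Longrightarrow> B (c + t) t' = 0"
  shows "c + t = 0"
proof -
  obtain e where e: "e \<in> A0 \<inter> orth odd_annihilator"
    "\<And>x. x \<in> A0 \<inter> orth odd_annihilator \<Longrightarrow> mul x e = x"
    "\<And>x. x \<in> A0 \<Longrightarrow> mul e x \<in> A0 \<inter> orth odd_annihilator"
    "\<And>x. x \<in> A0 \<Longrightarrow> x - mul e x \<in> even.annihilator (A0 \<inter> orth odd_annihilator)"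
    using even.ideal_central_unit[OF ideal_even_orth_odd_annihilator] by blast
  have tA: "t \<in> A1"
    using t unfolding odd_annihilator_def by blast
  have cA: "c \<in> A0"
    using c unfolding even.annihilator_def by blast
  have "B c t' = 0" if "t' \<in> odd_annihilator" for t'
    using orth_t[OF that] B_odd_odd[OF tA] that unfolding odd_annihilator_def by (simp add: B_linear)
  then have "c \<in> A0 \<inter> orth odd_annihilator"
    using cA unfolding orth_def by blast
  then have c0: "c = 0"
    using e(1,2) c unfolding even.annihilator_def by force
  have "t = 0"
  proof (rule B_nondeg_odd[OF tA])
    fix x assume x: "x \<in> A0"
    have "B (mul e x) t = 0"
      using e(3)[OF x] t unfolding orth_def by blast
    moreover have "B (x - mul e x) t = 0"
      using orth_c[OF e(4)[OF x]] c0 B_sym by simp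
    ultimately show "B x t = 0"
      by (simp add: B_linear)
  qed
  then show ?thesis
    using c0 by simp
qed

lemma odd_mult_zero:
  assumes "a \<in> A1" "b \<in> A1"
  shows "mul a b = 0"
proof -
  let ?N = "even.annihilator (A0 \<inter> orth odd_annihilator)"
  let ?G = "{c + t | c t. c \<in> ?N \<and> t \<in> odd_annihilator}"
  have N: "even.ideal ?N"
    by (rule even.ideal_annihilator[OF ideal_even_orth_odd_annihilator])
  have T: "subspace odd_annihilator" "odd_annihilator \<subseteq> A1"
    using subspace_odd_annihilator unfolding odd_annihilator_def by auto
  have "graded_ideal scale mul A0 A1 ?G"
  proof (rule graded_ideal_sum)
    show "subspace ?N" "?N \<subseteq> A0"
      using N unfolding even.ideal_def by auto
    show "\<And>u x. u \<in> A0 \<Longrightarrow> x \<in> ?N \<Longrightarrow> mul u x \<in> ?N \<and> mul x u \<in> ?N"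
      using N unfolding even.ideal_def by blast
    show "\<And>u y. u \<in> A0 \<Longrightarrow> y \<in> odd_annihilator \<Longrightarrow>
        mul u y \<in> odd_annihilator \<and> mul y u \<in> odd_annihilator"
      using odd_annihilator_even_mult by blast
    show "\<And>u y. u \<in> A1 \<Longrightarrow> y \<in> odd_annihilator \<Longrightarrow> mul u y = 0 \<and> mul y u = 0"
      unfolding odd_annihilator_def by blast
  qed (use T annihilator_odd_mult in blast)+
  moreover have "\<forall>v\<in>?G. (\<forall>w\<in>?G. B v w = 0) \<longrightarrow> v = 0"
  proof (intro ballI impI)
    fix v assume "v \<in> ?G" and orth_v: "\<forall>w\<in>?G. B v w = 0"
    then obtain c t where ct: "c \<in> ?N" "t \<in> odd_annihilator" "v = c + t"
      by blast
    have "?N \<subseteq> ?G" "odd_annihilator \<subseteq> ?G"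
      using subspace_0[OF T(1)] subspace_0 N unfolding even.ideal_def by force+
    then show "v = 0"
      using annihilator_sum_nondegenerate[OF ct(1,2)] orth_v ct(3) by blast
  qed
  moreover have "?G \<noteq> {0}"
    using odd_annihilator_nonzero N subspace_0 unfolding even.ideal_def by force
  ultimately have "?G = UNIV"
    by (rule nondegenerate_graded_ideal_UNIV)
  then have "A1 \<subseteq> odd_annihilator"
    using graded_sum_UNIV(2) T(2) N unfolding even.ideal_def by blast
  then show ?thesis
    using assms unfolding odd_annihilator_def by blast
qed

lemma orth_annihilator_mult:
  assumes J: "even.ideal J"
  shows "\<And>a j. a \<in> A1 \<Longrightarrow> j \<in> J \<Longrightarrow>
      mul a j \<in> A1 \<inter> orth (even.annihilator J) \<and> mul j a \<in> A1 \<inter> orth (even.annihilator J)"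
    and "\<And>x p. x \<in> A0 \<Longrightarrow> p \<in> A1 \<inter> orth (even.annihilator J) \<Longrightarrow>
      mul x p \<in> A1 \<inter> orth (even.annihilator J) \<and> mul p x \<in> A1 \<inter> orth (even.annihilator J)"
proof -
  have JA: "J \<subseteq> A0"
    using J unfolding even.ideal_def by blast
  have N: "even.ideal (even.annihilator J)"
    by (rule even.ideal_annihilator[OF J])
  show "mul a j \<in> A1 \<inter> orth (even.annihilator J) \<and> mul j a \<in> A1 \<inter> orth (even.annihilator J)"
    if a: "a \<in> A1" and j: "j \<in> J" for a j
  proof -
    have "B (mul a j) c = 0 \<and> B (mul j a) c = 0" if "c \<in> even.annihilator J" for c
    proof
      have jc: "mul j c = 0" "mul c j = 0"
        using that j unfolding even.annihilator_def by auto
      then show "B (mul a j) c = 0"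
        by (simp add: B_assoc)
      have "B (mul j a) c = B a (mul c j)"
        using B_assoc B_sym by metis
      then show "B (mul j a) c = 0"
        using jc by simp
    qed
    then show ?thesis
      using mul_odd_even mul_even_odd a j JA unfolding orth_def by blast
  qed
  show "mul x p \<in> A1 \<inter> orth (even.annihilator J) \<and> mul p x \<in> A1 \<inter> orth (even.annihilator J)"
    if x: "x \<in> A0" and p: "p \<in> A1 \<inter> orth (even.annihilator J)" for x p
  proof -
    have "B (mul x p) c = 0 \<and> B (mul p x) c = 0" if "c \<in> even.annihilator J" for c
    proof -
      have "mul c x \<in> even.annihilator J" "mul x c \<in> even.annihilator J"
        using N x that unfolding even.ideal_def by blast+
      moreover have "B (mul x p) c = B p (mul c x)" "B (mul p x) c = B p (mul x c)"
        using B_assoc B_sym by metis+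
      ultimately show ?thesis
        using p unfolding orth_def by simp
    qed
    then show ?thesis
      using mul_odd_even mul_even_odd x p unfolding orth_def by blast
  qed
qed

lemma ideal_sum_nondegenerate:
  assumes J: "even.ideal J" and j: "j \<in> J" and p: "p \<in> A1 \<inter> orth (even.annihilator J)"
    and orth_j: "\<And>j'. j' \<in> J \<Longrightarrow> B (j + p) j' = 0"
    and orth_p: "\<And>p'. p' \<in> A1 \<inter> orth (even.annihilator J) \<Longrightarrow> B (j + p) p' = 0"
  shows "j + p = 0"
proof -
  obtain e where e: "e \<in> J" "\<And>x. x \<in> J \<Longrightarrow> mul x e = x" "\<And>x. x \<in> A0 \<Longrightarrow> mul e x \<in> J"
    "\<And>x. x \<in> A0 \<Longrightarrow> x - mul e x \<in> even.annihilator J"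
    using even.ideal_central_unit[OF J] by blast
  have JA: "J \<subseteq> A0"
    using J unfolding even.ideal_def by blast
  have p0: "p = 0"
  proof (rule B_nondeg_odd)
    show "p \<in> A1"
      using p by blast
    fix x assume x: "x \<in> A0"
    have "B j (mul e x) = 0"
      using B_even_even e(3)[OF x] j JA by blast
    then have "B p (mul e x) = 0"
      using orth_j[OF e(3)[OF x]] by (simp add: B_linear)
    moreover have "B p (x - mul e x) = 0"
      using p e(4)[OF x] unfolding orth_def by blast
    ultimately show "B x p = 0"
      using B_sym[of p x] by (simp add: B_linear)
  qed
  have "j = 0"
  proof (rule B_nondeg_even)
    show "j \<in> A0"
      using j JA by blast
    fix a assume a: "a \<in> A1"
    have "mul e a \<in> A1 \<inter> orth (even.annihilator J)"
      using orth_annihilator_mult(1)[OF J a e(1)] by blast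
    then have "B j (mul e a) = 0"
      using orth_p p0 by simp
    then show "B j a = 0"
      using e(2)[OF j] by (simp add: B_assoc[symmetric])
  qed
  then show ?thesis
    using p0 by simp
qed

lemma even_ideal_trivial:
  assumes J: "even.ideal J"
  shows "J = {0} \<or> J = A0"
proof (cases "J = {0}")
  case False
  let ?P = "A1 \<inter> orth (even.annihilator J)"
  let ?I = "{j + p | j p. j \<in> J \<and> p \<in> ?P}"
  have sJ: "subspace J" and JA: "J \<subseteq> A0"
    using J unfolding even.ideal_def by auto
  have JI: "J \<subseteq> ?I" and PI: "?P \<subseteq> ?I"
    using subspace_0[OF sJ] subspace_0[OF subspace_inter[OF subspace_A1 subspace_orth]] by force+
  have "graded_ideal scale mul A0 A1 ?I"
  proof (rule graded_ideal_sum[OF sJ JA])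
    show "subspace ?P"
      using subspace_inter[OF subspace_A1 subspace_orth] .
    show "\<And>u y. u \<in> A1 \<Longrightarrow> y \<in> ?P \<Longrightarrow> mul u y = 0 \<and> mul y u = 0"
      using odd_mult_zero by blast
  qed (use J orth_annihilator_mult[OF J] in \<open>auto simp: even.ideal_def\<close>)
  moreover have "\<forall>v\<in>?I. (\<forall>w\<in>?I. B v w = 0) \<longrightarrow> v = 0"
  proof (intro ballI impI)
    fix v assume "v \<in> ?I" and orth_v: "\<forall>w\<in>?I. B v w = 0"
    then obtain j p where jp: "j \<in> J" "p \<in> ?P" "v = j + p"
      by blast
    then show "v = 0"
      using ideal_sum_nondegenerate[OF J jp(1,2)] orth_v JI PI jp(3) by blast
  qed
  moreover have "?I \<noteq> {0}"
    using False JI subspace_0[OF sJ] by blast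
  ultimately have "?I = UNIV"
    by (rule nondegenerate_graded_ideal_UNIV)
  then show ?thesis
    using graded_sum_UNIV(1)[OF JA] JA by blast
qed simp

lemma parts_mul:
  "even_part (mul x y) = mul (even_part x) (even_part y)"
  "odd_part (mul x y) = mul (even_part x) (odd_part y) + mul (odd_part x) (even_part y)"
proof -
  have "mul x y = mul (even_part x + odd_part x) (even_part y + odd_part y)"
    using even_plus_odd by simp
  also have "\<dots> = mul (even_part x) (even_part y)
      + (mul (even_part x) (odd_part y) + mul (odd_part x) (even_part y))"
    using odd_mult_zero[OF odd_part odd_part] by (simp add: m_linear algebra_simps)
  finally show "even_part (mul x y) = mul (even_part x) (even_part y)"
    "odd_part (mul x y) = mul (even_part x) (odd_part y) + mul (odd_part x) (even_part y)"
    using parts_unique[OF mul_even_even[OF even_part even_part]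
        subspace_add[OF subspace_A1 mul_even_odd[OF even_part odd_part] mul_odd_even[OF odd_part even_part]]]
    by simp_all
qed

lemma to_semidirect_mul: "to_semidirect (mul x y) = sd_mul A0 mul (to_semidirect x) (to_semidirect y)"
proof -
  have "B z (mul (even_part x) (odd_part y) + mul (odd_part x) (even_part y))
      = B (mul z (even_part x)) (odd_part y) + B (mul (even_part y) z) (odd_part x)" for z
    using B_assoc[of z] B_assoc[of "odd_part x"] B_sym[of z] B_sym[of "odd_part x"]
    by (simp add: B_linear)
  then show ?thesis
    unfolding to_semidirect_def sd_mul_def odd_functional_def
    using mul_even_even[OF _ even_part] mul_even_even[OF even_part]
    by (auto simp: parts_mul fun_eq_iff)
qed

lemma even_simple: "simple_assoc_alg scale A0 mul"
proof -
  obtain e where "e \<in> A0" "\<forall>x\<in>A0. mul x e = x \<and> mul e x = x"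
    using even.ideal_unit subspace_A0 mul_even_even unfolding even.ideal_def by blast
  then have "\<exists>x\<in>A0. \<exists>y\<in>A0. mul x y \<noteq> 0"
    using even_nonzero by metis
  moreover have "J = {0} \<or> J = A0" if "alg_ideal scale A0 mul J" for J
    using that even_ideal_trivial unfolding alg_ideal_def even.ideal_def by blast
  ultimately show ?thesis
    unfolding simple_assoc_alg_def bilinear_on_def
    using subspace_A0 mul_even_even by (simp add: m_linear m_assoc)
qed

end

lemma fin_dim_vs_basis:
  assumes "fin_dim_vs scale"
  obtains basis where "finite_dimensional_vector_space scale basis"
proof -
  interpret vector_space scale
    using assms unfolding fin_dim_vs_def by blast
  obtain F where F: "finite F" "span F = UNIV"
    using assms unfolding fin_dim_vs_def by blast
  obtain basis where basis: "independent basis" "UNIV \<subseteq> span basis"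
    using basis_exists[of UNIV] by blast
  have "finite basis"
    using independent_span_bound[OF F(1) basis(1)] F(2) by blast
  then have "finite_dimensional_vector_space scale basis"
    using basis by unfold_locales auto
  then show thesis
    by (rule that)
qed

theorem mainTheorem9:
  fixes scale :: "'k::field_char_0 \<Rightarrow> 'v::ab_group_add \<Rightarrow> 'v"
    and mul :: "'v \<Rightarrow> 'v \<Rightarrow> 'v"
    and A0 A1 :: "'v set"
    and B :: "'v \<Rightarrow> 'v \<Rightarrow> 'k"
  assumes "alg_closed TYPE('k)"
    and "assoc_superalgebra scale mul A0 A1"
    and "odd_symmetric_form scale mul A0 A1 B"
    and "B_irreducible scale mul A0 A1 B"
    and "\<not> simple_superalgebra scale mul A0 A1"
    and "semisimple_alg scale A0 mul"
  shows "\<exists>(S :: 'v set) (mS :: 'v \<Rightarrow> 'v \<Rightarrow> 'v) (\<phi> :: 'v \<Rightarrow> 'v \<times> ('v \<Rightarrow> 'k)).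
           simple_assoc_alg scale S mS \<and>
           bij_betw \<phi> UNIV (S \<times> dual_space scale S) \<and>
           (\<forall>x y. \<phi> (x + y) = sd_add (\<phi> x) (\<phi> y)) \<and>
           (\<forall>c x. \<phi> (scale c x) = sd_scale scale c (\<phi> x)) \<and>
           (\<forall>x y. \<phi> (mul x y) = sd_mul S mS (\<phi> x) (\<phi> y)) \<and>
           \<phi> ` A0 = S \<times> {\<lambda>_. 0} \<and>
           \<phi> ` A1 = {0} \<times> dual_space scale S"
proof -
  obtain basis where "finite_dimensional_vector_space scale basis"
    using fin_dim_vs_basis assms(2) unfolding assoc_superalgebra_def by blast
  then interpret nonsimple_irreducible_superalgebra scale basis mul A0 A1 B
    using assms(2-6) by (simp add: nonsimple_irreducible_superalgebra_def
        nonsimple_irreducible_superalgebra_axioms_def odd_symmetric_superalgebra_def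
        odd_symmetric_superalgebra_axioms_def)
  show ?thesis
    by (intro exI[of _ A0] exI[of _ mul] exI[of _ to_semidirect] conjI allI even_simple
        to_semidirect_bij to_semidirect_add to_semidirect_scale to_semidirect_mul
        to_semidirect_even to_semidirect_odd)
qed

end
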